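(* Let $\mathcal V=(0,1/16)^2$ and let $\mathcal K$ be the set of $(p,q)\in\mathcal V$ for which $K_{pq}$ is a twofold Cantor set. Then $\mathcal K$ has full two-dimensional Lebesgue measure in $\mathcal V$, and its complement $\mathcal V\setminus\mathcal K$ is uncountable and dense in $\mathcal V$.
   Context: For $p,q\in(0,1/2)$ let $S_1(x)=px$, $S_2(x)=qx$, $S_3(x)=px+1-p$, $S_4(x)=qx+1-q$, let $K_{pq}$ be the attractor of $\{S_1,S_2,S_3,S_4\}$ (the unique nonempty compact $K\subset\mathbb R$ with $K=\bigcup_{i=1}^4S_i(K)$), and let $A=S_3(K_{pq})\cup S_4(K_{pq})$. $K_{pq}$ is called a twofold Cantor set if $S_1^m(A)\cap S_2^n(A)=\varnothing$ for all $m,n\in\mathbb N$. *)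

theory Defs
  imports "HOL-Analysis.Analysis"
begin

definition S1 :: "real \<Rightarrow> real \<Rightarrow> real \<Rightarrow> real" where "S1 p q x = p * x"
definition S2 :: "real \<Rightarrow> real \<Rightarrow> real \<Rightarrow> real" where "S2 p q x = q * x"
definition S3 :: "real \<Rightarrow> real \<Rightarrow> real \<Rightarrow> real" where "S3 p q x = p * x + 1 - p"
definition S4 :: "real \<Rightarrow> real \<Rightarrow> real \<Rightarrow> real" where "S4 p q x = q * x + 1 - q"

definition Kpq :: "real \<Rightarrow> real \<Rightarrow> real set" where
  "Kpq p q = (THE K. compact K \<and> K \<noteq> {} \<and>
      K = S1 p q ` K \<union> S2 p q ` K \<union> S3 p q ` K \<union> S4 p q ` K)"

definition Apq :: "real \<Rightarrow> real \<Rightarrow> real set" where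
  "Apq p q = S3 p q ` Kpq p q \<union> S4 p q ` Kpq p q"

definition twofold_cantor :: "real \<Rightarrow> real \<Rightarrow> bool" where
  "twofold_cantor p q \<longleftrightarrow>
     (\<forall>m n::nat. m \<ge> 1 \<longrightarrow> n \<ge> 1 \<longrightarrow>
        (S1 p q ^^ m) ` Apq p q \<inter> (S2 p q ^^ n) ` Apq p q = {})"

end

theory Submission
  imports Defs
begin

text \<open>
  \<open>K\<^sub>p\<^sub>q\<close> fails to be twofold exactly when \<open>p\<^sup>m a = q\<^sup>n b\<close> for some \<open>m, n \<ge> 1\<close> and
  \<open>a, b \<in> A\<close>. Since \<open>1 \<in> A\<close>, this happens whenever \<open>p\<^sup>m = q\<^sup>n\<close>; such pairs contain the diagonal
  and, for every \<open>p\<close>, the points \<open>q = p\<^bsup>m/n\<^esup>\<close>, which are dense.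

  For the measure statement fix \<open>m, n\<close> and a box \<open>[\<delta>, r]\<^sup>2\<close> with \<open>r < 1/16\<close>. Every point of \<open>A\<close>
  is the image of a point of \<open>[0, 1]\<close> under a word of length \<open>k + 1\<close> starting with \<open>S\<^sub>3\<close> or \<open>S\<^sub>4\<close>,
  so an exceptional \<open>(p, q)\<close> lies within \<open>2 r\<^sup>k\<close> of a zero of one of \<open>16\<^bsup>k+1\<^esup>\<close> functions
  \<open>p\<^sup>m a\<^sub>u(p, q) - q\<^sup>n b\<^sub>v(p, q)\<close>, where \<open>a\<^sub>u, b\<^sub>v \<in> [15/16, 1]\<close> depend on \<open>q\<close> only
  with Lipschitz constant \<open>2\<close>. The factor \<open>q\<^sup>n\<close> dominates this dependence, so every vertical
  slice of such a neighbourhood has length \<open>O(r\<^sup>k / \<delta>\<^bsup>n-1\<^esup>)\<close>, and the exceptional set has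
  measure \<open>O((16 r)\<^sup>k) \<rightarrow> 0\<close>.
\<close>

section \<open>Words in the similarity maps\<close>

definition ifs_ratio :: "nat \<Rightarrow> real \<Rightarrow> real \<Rightarrow> real" where
  "ifs_ratio i p q = (if odd i then p else q)"

definition ifs_map :: "nat \<Rightarrow> real \<Rightarrow> real \<Rightarrow> real \<Rightarrow> real" where
  "ifs_map i p q x = ifs_ratio i p q * x + (if i \<le> 2 then 0 else 1 - ifs_ratio i p q)"

lemma S_eq_ifs_map:
  "S1 p q = ifs_map 1 p q" "S2 p q = ifs_map 2 p q" "S3 p q = ifs_map 3 p q" "S4 p q = ifs_map 4 p q"
  by (auto simp: fun_eq_iff S1_def S2_def S3_def S4_def ifs_map_def ifs_ratio_def)

fun word_map :: "real \<Rightarrow> real \<Rightarrow> nat list \<Rightarrow> real \<Rightarrow> real" where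
  "word_map p q [] x = x"
| "word_map p q (i # w) x = ifs_map i p q (word_map p q w x)"

lemma ifs_ratio_cases: "ifs_ratio i p q = p \<or> ifs_ratio i p q = q"
  by (simp add: ifs_ratio_def)

lemma ifs_map_diff: "ifs_map i p q x - ifs_map i p q y = ifs_ratio i p q * (x - y)"
  by (simp add: ifs_map_def algebra_simps)

lemma ifs_map_unit_interval:
  assumes "p \<in> {0..1}" "q \<in> {0..1}" "x \<in> {0..1}"
  shows "ifs_map i p q x \<in> {0..1}"
proof -
  have "ifs_ratio i p q \<in> {0..1}" using ifs_ratio_cases[of i p q] assms by auto
  moreover have "ifs_ratio i p q * x \<in> {0..ifs_ratio i p q}"
    using calculation assms(3) by (auto simp: mult_left_le)
  ultimately show ?thesis by (auto simp: ifs_map_def)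
qed

lemma word_map_unit_interval:
  assumes "p \<in> {0..1}" "q \<in> {0..1}" "x \<in> {0..1}"
  shows "word_map p q w x \<in> {0..1}"
  by (induction w) (use assms ifs_map_unit_interval in auto)

lemma word_map_contraction:
  assumes "0 \<le> p" "0 \<le> q"
  shows "\<bar>word_map p q w x - word_map p q w y\<bar> \<le> max p q ^ length w * \<bar>x - y\<bar>"
proof (induction w)
  case Nil then show ?case by simp
next
  case (Cons i w)
  have "\<bar>word_map p q (i # w) x - word_map p q (i # w) y\<bar>
      = ifs_ratio i p q * \<bar>word_map p q w x - word_map p q w y\<bar>"
    using ifs_ratio_cases[of i p q] assms by (auto simp: ifs_map_diff abs_mult)
  also have "\<dots> \<le> max p q * (max p q ^ length w * \<bar>x - y\<bar>)"
    using Cons ifs_ratio_cases[of i p q] assms by (intro mult_mono) auto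
  finally show ?case by simp
qed

lemma continuous_on_word_map:
  "continuous_on UNIV (\<lambda>z :: real \<times> real. word_map (fst z) (snd z) w x)"
proof (induction w)
  case (Cons i w)
  then show ?case
    by (cases "odd i"; cases "i \<le> 2") (simp_all add: ifs_map_def ifs_ratio_def continuous_intros)
qed simp

section \<open>The attractor\<close>

definition is_attractor :: "real \<Rightarrow> real \<Rightarrow> real set \<Rightarrow> bool" where
  "is_attractor p q K \<longleftrightarrow> compact K \<and> K \<noteq> {} \<and> K = (\<Union>i\<in>{1,2,3,4}. ifs_map i p q ` K)"

lemma Kpq_eq_The_attractor: "Kpq p q = (THE K. is_attractor p q K)"
  by (simp add: Kpq_def is_attractor_def S_eq_ifs_map Un_ac)

lemma attractor_word_image:
  assumes "is_attractor p q K" "set w \<subseteq> {1,2,3,4}" "y \<in> K"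
  shows "word_map p q w y \<in> K"
  using assms(2)
proof (induction w)
  case Nil then show ?case using assms(3) by simp
next
  case (Cons i w)
  then show ?case using assms(1) unfolding is_attractor_def by auto
qed

lemma attractor_word_preimage:
  assumes "is_attractor p q K" "x \<in> K"
  shows "\<exists>w y. set w \<subseteq> {1,2,3,4} \<and> length w = k \<and> y \<in> K \<and> x = word_map p q w y"
  using assms(2)
proof (induction k arbitrary: x)
  case 0 then show ?case by force
next
  case (Suc k)
  then obtain i y' where "i \<in> {1,2,3,4}" "y' \<in> K" "x = ifs_map i p q y'"
    using assms(1) unfolding is_attractor_def by blast
  moreover obtain w y where "set w \<subseteq> {1,2,3,4}" "length w = k" "y \<in> K" "y' = word_map p q w y"
    using Suc.IH[OF \<open>y' \<in> K\<close>] by blast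
  ultimately show ?case by (intro exI[of _ "i # w"] exI[of _ y]) auto
qed

lemma mem_closed_if_word_approximable:
  assumes pq: "0 \<le> p" "0 \<le> q" "max p q < 1"
    and C: "closed C" "z \<in> C" "\<And>w. set w \<subseteq> {1,2,3,4} \<Longrightarrow> word_map p q w z \<in> C"
    and B: "bounded B"
    and x: "\<And>k. \<exists>w y. set w \<subseteq> {1,2,3,4} \<and> length w = k \<and> y \<in> B \<and> x = word_map p q w y"
  shows "x \<in> C"
proof -
  obtain M where M: "0 < M" "\<And>y. y \<in> B \<Longrightarrow> \<bar>z - y\<bar> \<le> M"
    using bounded_pos[THEN iffD1, OF bounded_insert[THEN iffD2, OF B, of z]]
    by (metis abs_triangle_ineq4 add_pos_pos insert_iff order_trans real_norm_def add_mono)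
  have "\<exists>c\<in>C. dist c x < e" if e: "0 < e" for e
  proof -
    obtain k where k: "max p q ^ k < e / M"
      using real_arch_pow_inv[OF divide_pos_pos[OF e M(1)] pq(3)] by blast
    obtain w y where w: "set w \<subseteq> {1,2,3,4}" "length w = k" "y \<in> B" "x = word_map p q w y"
      using x by blast
    have "dist (word_map p q w z) x \<le> max p q ^ k * \<bar>z - y\<bar>"
      using word_map_contraction[OF pq(1,2), of w z y] w by (simp add: dist_real_def)
    also have "\<dots> \<le> max p q ^ k * M"
      using M(2)[OF w(3)] pq by (intro mult_left_mono) auto
    also have "\<dots> < e" using k M(1) by (simp add: pos_less_divide_eq)
    finally show ?thesis using C(3)[OF w(1)] by blast
  qed
  then have "x \<in> closure C" by (simp add: closure_approachable)
  then show ?thesis using C(1) by (simp add: closure_closed)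
qed

lemma attractor_subset_unit_interval:
  assumes pq: "0 < p" "p < 1" "0 < q" "q < 1" and K: "is_attractor p q K"
  shows "K \<subseteq> {0..1}"
proof
  fix x assume "x \<in> K"
  show "x \<in> {0..1}"
  proof (rule mem_closed_if_word_approximable[of p q "{0..1}" 0 K])
    show "bounded K" using K by (simp add: is_attractor_def compact_imp_bounded)
    show "\<exists>w y. set w \<subseteq> {1,2,3,4} \<and> length w = k \<and> y \<in> K \<and> x = word_map p q w y" for k
      using attractor_word_preimage[OF K \<open>x \<in> K\<close>] .
  qed (use pq word_map_unit_interval in auto)
qed

lemma attractor_unique:
  assumes pq: "0 < p" "p < 1" "0 < q" "q < 1"
    and K: "is_attractor p q K" and K': "is_attractor p q K'"
  shows "K = K'"
proof -
  have "K \<subseteq> K'" if K: "is_attractor p q K" and K': "is_attractor p q K'" for K K'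
  proof
    fix x assume "x \<in> K"
    obtain z where "z \<in> K'" using K' by (auto simp: is_attractor_def)
    show "x \<in> K'"
    proof (rule mem_closed_if_word_approximable[of p q K' z K])
      show "closed K'" using K' by (simp add: is_attractor_def compact_imp_closed)
      show "bounded K" using K by (simp add: is_attractor_def compact_imp_bounded)
      show "\<exists>w y. set w \<subseteq> {1,2,3,4} \<and> length w = k \<and> y \<in> K \<and> x = word_map p q w y" for k
        using attractor_word_preimage[OF K \<open>x \<in> K\<close>] .
    qed (use pq \<open>z \<in> K'\<close> attractor_word_image[OF K'] in auto)
  qed
  then show ?thesis using K K' by blast
qed

text \<open>The attractor is the closure of the orbit of \<open>0\<close> under all words.\<close>
lemma attractor_exists:
  assumes pq: "0 < p" "p < 1" "0 < q" "q < 1"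
  shows "\<exists>K. is_attractor p q K"
proof -
  define P where "P = (\<lambda>w. word_map p q w 0) ` {w. set w \<subseteq> {1,2,3,4}}"
  have "P \<subseteq> {0..1}" unfolding P_def using word_map_unit_interval pq by auto
  then have bP: "bounded P" by (rule bounded_subset[OF bounded_closed_interval])
  have "0 \<in> P" unfolding P_def by (auto intro: image_eqI[of _ _ "[]"])
  have P_Cons: "word_map p q (i # w) 0 \<in> P" if "i \<in> {1,2,3,4}" "set w \<subseteq> {1,2,3,4}" for i w
    using that unfolding P_def by (intro image_eqI[of _ _ "i # w"]) auto
  have P_eq: "P = (\<Union>i\<in>{1,2,3,4}. ifs_map i p q ` P)"
  proof (intro equalityI subsetI)
    fix x assume "x \<in> P"
    then obtain w where w: "set w \<subseteq> {1,2,3,4}" "x = word_map p q w 0" by (auto simp: P_def)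
    show "x \<in> (\<Union>i\<in>{1,2,3,4}. ifs_map i p q ` P)"
    proof (cases w)
      case Nil
      then have "x = ifs_map 1 p q 0" using w by (simp add: ifs_map_def ifs_ratio_def)
      then show ?thesis using \<open>0 \<in> P\<close> by blast
    next
      case (Cons i w')
      then have "i \<in> {1,2,3,4}" "x = ifs_map i p q (word_map p q w' 0)" "word_map p q w' 0 \<in> P"
        using w unfolding P_def by auto
      then show ?thesis by blast
    qed
  next
    fix x assume "x \<in> (\<Union>i\<in>{1,2,3,4}. ifs_map i p q ` P)"
    then obtain i w where "i \<in> {1,2,3,4}" "set w \<subseteq> {1,2,3,4}" "x = word_map p q (i # w) 0"
      unfolding P_def by auto
    then show "x \<in> P" using P_Cons by simp
  qed
  have closure_image: "closure (ifs_map i p q ` P) = ifs_map i p q ` closure P" for i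
  proof
    have cont: "continuous_on A (ifs_map i p q)" for A
      unfolding ifs_map_def by (intro continuous_intros)
    show "ifs_map i p q ` closure P \<subseteq> closure (ifs_map i p q ` P)"
      by (rule image_closure_subset[OF cont closed_closure]) (simp add: closure_subset image_mono)
    have "compact (ifs_map i p q ` closure P)"
      using bP by (intro compact_continuous_image cont) (simp add: compact_closure)
    then show "closure (ifs_map i p q ` P) \<subseteq> ifs_map i p q ` closure P"
      by (intro closure_minimal) (auto simp: compact_imp_closed intro: closure_subset[THEN subsetD])
  qed
  have "closure P = (\<Union>i\<in>{1,2,3,4}. ifs_map i p q ` closure P)"
    by (subst P_eq) (simp add: closure_Un closure_image)
  moreover have "compact (closure P)" "closure P \<noteq> {}"
    using bP \<open>0 \<in> P\<close> by (auto simp: compact_closure)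
  ultimately show ?thesis unfolding is_attractor_def by blast
qed

lemma Kpq_is_attractor:
  assumes "0 < p" "p < 1" "0 < q" "q < 1"
  shows "is_attractor p q (Kpq p q)"
proof -
  have "\<exists>!K. is_attractor p q K"
    using attractor_exists[OF assms] attractor_unique[OF assms] by blast
  then show ?thesis unfolding Kpq_eq_The_attractor by (rule theI')
qed

lemma one_mem_attractor:
  assumes pq: "0 < p" "p < 1" "0 < q" "q < 1" and K: "is_attractor p q K"
  shows "1 \<in> K"
proof -
  obtain z where "z \<in> K" using K by (auto simp: is_attractor_def)
  have fixed: "word_map p q (replicate k 3) 1 = 1" for k
    by (induction k) (simp_all add: ifs_map_def)
  show ?thesis
  proof (rule mem_closed_if_word_approximable[of p q K z "{1}"])
    show "closed K" using K by (simp add: is_attractor_def compact_imp_closed)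
    show "\<exists>w y. set w \<subseteq> {1,2,3,4} \<and> length w = k \<and> y \<in> {1} \<and> 1 = word_map p q w y" for k
      using fixed[of k] by (intro exI[of _ "replicate k 3"] exI[of _ 1]) auto
  qed (use pq \<open>z \<in> K\<close> attractor_word_image[OF K] in auto)
qed

section \<open>Coincidences\<close>

lemma S1_funpow: "(S1 p q ^^ m) x = p ^ m * x"
  by (induction m) (auto simp: S1_def)

lemma S2_funpow: "(S2 p q ^^ n) x = q ^ n * x"
  by (induction n) (auto simp: S2_def)

lemma not_twofold_cantor_iff:
  "\<not> twofold_cantor p q \<longleftrightarrow>
     (\<exists>m n a b. m \<ge> 1 \<and> n \<ge> 1 \<and> a \<in> Apq p q \<and> b \<in> Apq p q \<and> p ^ m * a = q ^ n * b)"
  unfolding twofold_cantor_def by (auto simp: S1_funpow S2_funpow)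

lemma one_mem_Apq:
  assumes "0 < p" "p < 1" "0 < q" "q < 1"
  shows "1 \<in> Apq p q"
proof -
  have "ifs_map 3 p q 1 \<in> Apq p q"
    using one_mem_attractor[OF assms Kpq_is_attractor[OF assms]] by (simp add: Apq_def S_eq_ifs_map)
  then show ?thesis by (simp add: ifs_map_def)
qed

lemma not_twofold_cantor_if_powers_eq:
  assumes "0 < p" "p < 1" "0 < q" "q < 1" "m \<ge> 1" "n \<ge> 1" "p ^ m = q ^ n"
  shows "\<not> twofold_cantor p q"
  unfolding not_twofold_cantor_iff using assms one_mem_Apq[OF assms(1-4)] by force

definition A_words :: "nat \<Rightarrow> nat list set" where
  "A_words k = {u. set u \<subseteq> {1,2,3,4} \<and> length u = Suc k \<and> hd u \<in> {3,4}}"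

lemma finite_A_words: "finite (A_words k)"
  and card_A_words: "card (A_words k) \<le> 4 ^ Suc k"
proof -
  have sub: "A_words k \<subseteq> {u. set u \<subseteq> {1::nat,2,3,4} \<and> length u = Suc k}"
    by (auto simp: A_words_def)
  have fin: "finite {u. set u \<subseteq> {1::nat,2,3,4} \<and> length u = Suc k}"
    by (rule finite_lists_length_eq) simp
  show "finite (A_words k)" using finite_subset[OF sub fin] .
  have "card (A_words k) \<le> card {u. set u \<subseteq> {1::nat,2,3,4} \<and> length u = Suc k}"
    by (rule card_mono[OF fin sub])
  also have "\<dots> = card {1::nat,2,3,4} ^ Suc k" by (rule card_lists_length_eq) simp
  also have "card {1::nat,2,3,4} = 4" by simp
  finally show "card (A_words k) \<le> 4 ^ Suc k" .
qed

lemma Apq_word_preimage: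
  assumes pq: "0 < p" "p < 1" "0 < q" "q < 1" and a: "a \<in> Apq p q"
  shows "\<exists>u y. u \<in> A_words k \<and> y \<in> {0..1} \<and> a = word_map p q u y"
proof -
  have K: "is_attractor p q (Kpq p q)" using Kpq_is_attractor[OF pq] .
  obtain i x where i: "i \<in> {3,4}" "x \<in> Kpq p q" "a = ifs_map i p q x"
    using a by (auto simp: Apq_def S_eq_ifs_map)
  obtain w y where w: "set w \<subseteq> {1,2,3,4}" "length w = k" "y \<in> Kpq p q" "x = word_map p q w y"
    using attractor_word_preimage[OF K i(2)] by blast
  have "y \<in> {0..1}" using attractor_subset_unit_interval[OF pq K] w(3) by blast
  then show ?thesis using i w by (intro exI[of _ "i # w"] exI[of _ y]) (auto simp: A_words_def)
qed

lemma A_word_near_one: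
  assumes "u \<in> A_words k" "p \<in> {0..1}" "q \<in> {0..1}" "x \<in> {0..1}"
  shows "1 - max p q \<le> word_map p q u x \<and> word_map p q u x \<le> 1"
proof -
  obtain i w where u: "u = i # w" "i \<in> {3,4}" using assms(1) by (cases u) (auto simp: A_words_def)
  define y where "y = word_map p q w x"
  have y: "y \<in> {0..1}" using word_map_unit_interval assms(2-4) by (simp add: y_def)
  have "ifs_ratio i p q \<in> {0..max p q}" using ifs_ratio_cases[of i p q] assms(2,3) by auto
  moreover have "ifs_ratio i p q * y \<in> {0..ifs_ratio i p q}"
    using calculation y by (auto simp: mult_left_le)
  ultimately show ?thesis using u by (auto simp: ifs_map_def y_def)
qed

section \<open>Transversality\<close>

lemma word_map_param_lipschitz:
  assumes "p1 \<in> {0..1/2}" "q1 \<in> {0..1/2}" "p2 \<in> {0..1}" "q2 \<in> {0..1}" "x \<in> {0..1}"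
    and "\<bar>p2 - p1\<bar> \<le> D" "\<bar>q2 - q1\<bar> \<le> D"
  shows "\<bar>word_map p2 q2 w x - word_map p1 q1 w x\<bar> \<le> 2 * D"
proof (induction w)
  case Nil then show ?case using assms by simp
next
  case (Cons i w)
  define g1 where "g1 = word_map p1 q1 w x"
  define g2 where "g2 = word_map p2 q2 w x"
  define c1 where "c1 = ifs_ratio i p1 q1"
  define c2 where "c2 = ifs_ratio i p2 q2"
  define s :: real where "s = (if i \<le> 2 then 0 else 1)"
  have "\<bar>g2 - s\<bar> \<le> 1"
    using word_map_unit_interval[of p2 q2 x w] assms by (auto simp: g2_def s_def)
  moreover have "\<bar>c2 - c1\<bar> \<le> D" "c1 \<in> {0..1/2}"
    using assms by (auto simp: c1_def c2_def ifs_ratio_def)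
  ultimately have "\<bar>c2 - c1\<bar> * \<bar>g2 - s\<bar> \<le> D * 1" "c1 * \<bar>g2 - g1\<bar> \<le> 1/2 * (2 * D)"
    using Cons by (intro mult_mono; simp add: g1_def g2_def)+
  moreover have "word_map p2 q2 (i # w) x - word_map p1 q1 (i # w) x
      = (c2 - c1) * (g2 - s) + c1 * (g2 - g1)"
    by (simp add: g1_def g2_def c1_def c2_def s_def ifs_map_def algebra_simps)
  ultimately show ?case
    using abs_triangle_ineq[of "(c2 - c1) * (g2 - s)" "c1 * (g2 - g1)"] \<open>c1 \<in> {0..1/2}\<close>
    by (simp add: abs_mult)
qed

text \<open>Transversality: eliminating \<open>P\<close> gives
  \<open>X = q'\<^sup>n b' a - q\<^sup>n b a' \<le> 2\<epsilon>\<close>, whereas \<open>X \<ge> h q\<^bsup>n-1\<^esup> / 2\<close> because the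
  factors \<open>a, b \<approx> 1\<close> move by only \<open>O(h)\<close> while \<open>q\<^sup>n\<close> moves by at least \<open>h q\<^bsup>n-1\<^esup>\<close>.\<close>
lemma transversality_estimate:
  fixes P q q' a a' b b' \<delta> \<epsilon> :: real
  assumes q: "q \<le> q'" "0 < \<delta>" "\<delta> \<le> q" "q' \<le> 1/16" "n \<ge> 1"
    and ab: "a \<in> {15/16..1}" "a' \<in> {15/16..1}" "b \<in> {15/16..1}" "b' \<in> {15/16..1}"
      "\<bar>a' - a\<bar> \<le> 2 * (q' - q)" "\<bar>b' - b\<bar> \<le> 2 * (q' - q)"
    and e: "\<bar>P * a - q ^ n * b\<bar> \<le> \<epsilon>" "\<bar>P * a' - q' ^ n * b'\<bar> \<le> \<epsilon>"
  shows "q' - q \<le> 4 * \<epsilon> / \<delta> ^ (n - 1)"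
proof -
  define h where "h = q' - q"
  define Q where "Q = q ^ (n - 1)"
  define X where "X = q' ^ n * b' * a - q ^ n * b * a'"
  have h: "0 \<le> h" using q by (simp add: h_def)
  have \<delta>Q: "\<delta> ^ (n - 1) \<le> Q" "0 < \<delta> ^ (n - 1)" unfolding Q_def using q by (auto intro: power_mono)
  have pow_n: "x ^ n = x * x ^ (n - 1)" for x :: real
    using q(5) by (cases n) auto
  have "\<bar>(P * a - q ^ n * b) * a'\<bar> \<le> \<epsilon> * 1" "\<bar>(P * a' - q' ^ n * b') * a\<bar> \<le> \<epsilon> * 1"
    using e ab unfolding abs_mult by (intro mult_mono; auto)+
  moreover have "X = (P * a - q ^ n * b) * a' - (P * a' - q' ^ n * b') * a"
    by (simp add: X_def algebra_simps)
  ultimately have upper: "X \<le> 2 * \<epsilon>" by linarith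
  have "h * Q \<le> q' ^ n - q ^ n"
  proof -
    have "q' * Q \<le> q' * q' ^ (n - 1)" unfolding Q_def using q by (intro mult_left_mono power_mono) auto
    then show ?thesis by (simp add: pow_n h_def Q_def algebra_simps)
  qed
  moreover have "7/8 \<le> b' * a" using ab mult_mono[of "15/16" b' "15/16" a] by auto
  moreover have "0 \<le> h * Q" using h \<delta>Q by simp
  ultimately have growth: "h * Q * (7/8) \<le> (q' ^ n - q ^ n) * (b' * a)"
    by (intro mult_mono) auto
  have "\<bar>b' * a - b * a'\<bar> = \<bar>(b' - b) * a + b * (a - a')\<bar>" by (simp add: algebra_simps)
  also have "\<dots> \<le> \<bar>b' - b\<bar> * \<bar>a\<bar> + \<bar>b\<bar> * \<bar>a - a'\<bar>"
    unfolding abs_mult[symmetric] by (rule abs_triangle_ineq)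
  also have "\<dots> \<le> 2 * h * 1 + 1 * (2 * h)"
    using ab unfolding h_def by (intro add_mono mult_mono) (auto simp: abs_minus_commute)
  finally have "q ^ n * \<bar>b' * a - b * a'\<bar> \<le> (1/16 * Q) * (4 * h)"
    using q \<delta>Q unfolding pow_n Q_def by (intro mult_mono) auto
  then have "\<bar>q ^ n * (b' * a - b * a')\<bar> \<le> h * Q / 4"
    using q by (simp add: abs_mult mult.commute)
  moreover have "X = (q' ^ n - q ^ n) * (b' * a) + q ^ n * (b' * a - b * a')"
    by (simp add: X_def algebra_simps)
  ultimately have "h * Q / 2 \<le> X"
    using growth unfolding abs_le_iff by linarith
  with upper have "h * \<delta> ^ (n - 1) \<le> 4 * \<epsilon>"
    using mult_left_mono[OF \<delta>Q(1) h] by linarith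
  then show ?thesis using \<delta>Q(2) by (simp add: h_def pos_le_divide_eq)
qed

section \<open>The exceptional set is null\<close>

lemma emeasure_le_if_vertical_slices_short:
  fixes T :: "(real \<times> real) set"
  assumes T: "T \<in> sets borel" "fst ` T \<subseteq> {a..b}" "a \<le> b" "0 \<le> L"
    and short: "\<And>x y y'. (x, y) \<in> T \<Longrightarrow> (x, y') \<in> T \<Longrightarrow> y \<le> y' \<Longrightarrow> y' - y \<le> L"
  shows "emeasure lborel T \<le> ennreal (2 * L * (b - a))"
proof -
  have slice: "emeasure lborel (Pair x -` T) \<le> ennreal (2 * L) * indicator {a..b} x" for x
  proof (cases "Pair x -` T = {}")
    case False
    then obtain y0 where y0: "(x, y0) \<in> T" by auto
    then have "x \<in> {a..b}" using T(2) by force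
    have "Pair x -` T \<subseteq> {y0 - L .. y0 + L}"
      using short[OF y0] short[OF _ y0] by (force simp: linorder_le_cases)
    then have "emeasure lborel (Pair x -` T) \<le> emeasure lborel {y0 - L .. y0 + L}"
      by (intro emeasure_mono) auto
    then show ?thesis using \<open>x \<in> {a..b}\<close> T(4) by simp
  qed simp
  have "emeasure lborel T = emeasure (lborel \<Otimes>\<^sub>M lborel) T"
    by (simp add: lborel_prod)
  also have "\<dots> = (\<integral>\<^sup>+x. emeasure lborel (Pair x -` T) \<partial>lborel)"
    by (rule lborel.emeasure_pair_measure_alt) (unfold lborel_prod, simp add: T(1))
  also have "\<dots> \<le> (\<integral>\<^sup>+x. ennreal (2 * L) * indicator {a..b} x \<partial>lborel)"
    by (intro nn_integral_mono slice)
  also have "\<dots> = ennreal (2 * L) * ennreal (b - a)"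
    using T(3) by (subst nn_integral_cmult_indicator) auto
  also have "\<dots> = ennreal (2 * L * (b - a))"
    using T(3,4) by (simp add: ennreal_mult)
  finally show ?thesis .
qed

definition coincidence_gap :: "nat \<Rightarrow> nat \<Rightarrow> nat list \<Rightarrow> nat list \<Rightarrow> real \<times> real \<Rightarrow> real" where
  "coincidence_gap m n u v z =
     fst z ^ m * word_map (fst z) (snd z) u 0 - snd z ^ n * word_map (fst z) (snd z) v 0"

definition near_coincidences ::
    "nat \<Rightarrow> nat \<Rightarrow> nat list \<Rightarrow> nat list \<Rightarrow> real \<Rightarrow> real \<Rightarrow> real \<Rightarrow> (real \<times> real) set" where
  "near_coincidences m n u v \<delta> r \<epsilon> =
     {z \<in> {\<delta>..r} \<times> {\<delta>..r}. \<bar>coincidence_gap m n u v z\<bar> \<le> \<epsilon>}"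

lemma near_coincidences_borel: "near_coincidences m n u v \<delta> r \<epsilon> \<in> sets borel"
proof -
  have cont: "continuous_on UNIV (coincidence_gap m n u v)"
    unfolding coincidence_gap_def[abs_def] by (intro continuous_intros continuous_on_word_map)
  then have "closed {z. \<bar>coincidence_gap m n u v z\<bar> \<le> \<epsilon>}"
    by (intro closed_Collect_le continuous_intros cont)
  then have "closed ({\<delta>..r} \<times> {\<delta>..r} \<inter> {z. \<bar>coincidence_gap m n u v z\<bar> \<le> \<epsilon>})"
    by (intro closed_Int closed_Times) auto
  then show ?thesis by (simp add: near_coincidences_def Int_def)
qed

lemma near_coincidences_slice_short:
  assumes "0 < \<delta>" "r \<le> 1/16" "n \<ge> 1" "u \<in> A_words k" "v \<in> A_words l"
    and "(p, q1) \<in> near_coincidences m n u v \<delta> r \<epsilon>" "(p, q2) \<in> near_coincidences m n u v \<delta> r \<epsilon>"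
    and "q1 \<le> q2"
  shows "q2 - q1 \<le> 4 * \<epsilon> / \<delta> ^ (n - 1)"
proof -
  have box: "p \<in> {\<delta>..r}" "q1 \<in> {\<delta>..r}" "q2 \<in> {\<delta>..r}"
    and gap: "\<bar>coincidence_gap m n u v (p, q1)\<bar> \<le> \<epsilon>" "\<bar>coincidence_gap m n u v (p, q2)\<bar> \<le> \<epsilon>"
    using assms(6,7) by (auto simp: near_coincidences_def)
  have near_one: "word_map p q w 0 \<in> {15/16..1}"
    if "w \<in> A_words j" "q \<in> {\<delta>..r}" for w j q
    using A_word_near_one[OF that(1), of p q 0] box that assms(1,2) by auto
  have param: "\<bar>word_map p q2 w 0 - word_map p q1 w 0\<bar> \<le> 2 * (q2 - q1)" for w
    using word_map_param_lipschitz[of p q1 p q2 0 "q2 - q1" w] box assms(1,2,8) by auto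
  show ?thesis
    using transversality_estimate[where P = "p ^ m" and q = q1 and q' = q2 and
        a = "word_map p q1 u 0" and a' = "word_map p q2 u 0" and
        b = "word_map p q1 v 0" and b' = "word_map p q2 v 0"]
      assms(1-5,8) box gap near_one param
    by (simp add: coincidence_gap_def)
qed

lemma emeasure_near_coincidences:
  assumes "0 < \<delta>" "\<delta> \<le> r" "r \<le> 1/16" "n \<ge> 1" "0 \<le> \<epsilon>" "u \<in> A_words k" "v \<in> A_words l"
  shows "emeasure lborel (near_coincidences m n u v \<delta> r \<epsilon>) \<le> ennreal (8 * \<epsilon> / \<delta> ^ (n - 1))"
proof -
  define L where "L = 4 * \<epsilon> / \<delta> ^ (n - 1)"
  have "0 \<le> L" using assms by (simp add: L_def)
  have "emeasure lborel (near_coincidences m n u v \<delta> r \<epsilon>) \<le> ennreal (2 * L * (r - \<delta>))"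
  proof (rule emeasure_le_if_vertical_slices_short[OF near_coincidences_borel _ assms(2) \<open>0 \<le> L\<close>])
    show "fst ` near_coincidences m n u v \<delta> r \<epsilon> \<subseteq> {\<delta>..r}"
      by (auto simp: near_coincidences_def)
    show "y' - y \<le> L" if "(x, y) \<in> near_coincidences m n u v \<delta> r \<epsilon>"
      "(x, y') \<in> near_coincidences m n u v \<delta> r \<epsilon>" "y \<le> y'" for x y y'
      using near_coincidences_slice_short[OF assms(1,3,4,6,7) that] by (simp add: L_def)
  qed
  also have "\<dots> \<le> ennreal (2 * L)"
    using \<open>0 \<le> L\<close> assms by (intro ennreal_leI) (simp add: mult_left_le)
  finally show ?thesis by (simp add: L_def)
qed

definition coincidences :: "nat \<Rightarrow> nat \<Rightarrow> real \<Rightarrow> real \<Rightarrow> (real \<times> real) set" where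
  "coincidences m n \<delta> r =
     {(p, q) \<in> {\<delta>..r} \<times> {\<delta>..r}. \<exists>a\<in>Apq p q. \<exists>b\<in>Apq p q. p ^ m * a = q ^ n * b}"

definition coincidence_cover :: "nat \<Rightarrow> nat \<Rightarrow> real \<Rightarrow> real \<Rightarrow> nat \<Rightarrow> (real \<times> real) set" where
  "coincidence_cover m n \<delta> r k =
     (\<Union>(u, v) \<in> A_words k \<times> A_words k. near_coincidences m n u v \<delta> r (2 * r ^ k))"

lemma coincidences_subset_cover:
  assumes "0 < \<delta>" "r \<le> 1/16"
  shows "coincidences m n \<delta> r \<subseteq> coincidence_cover m n \<delta> r k"
proof clarify
  fix p q assume "(p, q) \<in> coincidences m n \<delta> r"
  then obtain a b where box: "p \<in> {\<delta>..r}" "q \<in> {\<delta>..r}"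
      and ab: "a \<in> Apq p q" "b \<in> Apq p q" "p ^ m * a = q ^ n * b"
    by (auto simp: coincidences_def)
  have pq: "0 < p" "p < 1" "0 < q" "q < 1" using box assms by auto
  have truncate: "\<bar>word_map p q u 0 - c\<bar> \<le> r ^ k"
    if "c \<in> Apq p q" "u \<in> A_words k" "y \<in> {0..1}" "c = word_map p q u y" for c u y
  proof -
    have "\<bar>word_map p q u 0 - c\<bar> \<le> max p q ^ Suc k * \<bar>0 - y\<bar>"
      using word_map_contraction[of p q u 0 y] pq that by (simp add: A_words_def)
    also have "\<dots> \<le> r ^ Suc k * 1"
      using box that(3) assms(1) by (intro mult_mono power_mono) auto
    also have "\<dots> \<le> r ^ k" using box assms by (simp add: mult_left_le_one_le)
    finally show ?thesis .
  qed
  obtain u y where u: "u \<in> A_words k" "y \<in> {0..1}" "a = word_map p q u y"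
    using Apq_word_preimage[OF pq ab(1)] by blast
  obtain v y' where v: "v \<in> A_words k" "y' \<in> {0..1}" "b = word_map p q v y'"
    using Apq_word_preimage[OF pq ab(2)] by blast
  have "\<bar>p ^ m * (word_map p q u 0 - a)\<bar> \<le> 1 * r ^ k" "\<bar>q ^ n * (word_map p q v 0 - b)\<bar> \<le> 1 * r ^ k"
    unfolding abs_mult using pq truncate[OF ab(1) u] truncate[OF ab(2) v]
    by (intro mult_mono; simp add: power_le_one)+
  then have "\<bar>coincidence_gap m n u v (p, q)\<bar> \<le> 2 * r ^ k"
    using ab(3) by (simp add: coincidence_gap_def algebra_simps)
  then show "(p, q) \<in> coincidence_cover m n \<delta> r k"
    using box u(1) v(1) by (auto simp: coincidence_cover_def near_coincidences_def)
qed

lemma coincidence_cover_borel: "coincidence_cover m n \<delta> r k \<in> sets borel"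
  unfolding coincidence_cover_def using finite_A_words
  by (intro sets.finite_UN) (auto intro: near_coincidences_borel)

lemma emeasure_coincidence_cover:
  assumes "0 < \<delta>" "\<delta> \<le> r" "r \<le> 1/16" "n \<ge> 1"
  shows "emeasure lborel (coincidence_cover m n \<delta> r k) \<le> ennreal (16 ^ Suc k * (16 * r ^ k / \<delta> ^ (n - 1)))"
proof -
  define c where "c = 16 * r ^ k / \<delta> ^ (n - 1)"
  have "0 \<le> c" using assms by (simp add: c_def)
  have "emeasure lborel (coincidence_cover m n \<delta> r k)
      \<le> (\<Sum>uv \<in> A_words k \<times> A_words k.
            emeasure lborel (case uv of (u, v) \<Rightarrow> near_coincidences m n u v \<delta> r (2 * r ^ k)))"
    unfolding coincidence_cover_def
    by (rule emeasure_subadditive_finite) (auto simp: finite_A_words near_coincidences_borel)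
  also have "\<dots> \<le> (\<Sum>(u, v) \<in> A_words k \<times> A_words k. ennreal c)"
  proof (rule sum_mono, clarify)
    fix u v assume "u \<in> A_words k" "v \<in> A_words k"
    moreover have "0 \<le> r" using assms by simp
    ultimately show "emeasure lborel (near_coincidences m n u v \<delta> r (2 * r ^ k)) \<le> ennreal c"
      using emeasure_near_coincidences[OF assms, of "2 * r ^ k"] assms(1,2) by (simp add: c_def)
  qed
  also have "\<dots> = ennreal (real (card (A_words k) * card (A_words k)) * c)"
    using \<open>0 \<le> c\<close> by (simp add: card_cartesian_product ennreal_mult ennreal_of_nat_eq_real_of_nat)
  also have "\<dots> \<le> ennreal (16 ^ Suc k * c)"
  proof (intro ennreal_leI mult_right_mono \<open>0 \<le> c\<close>)
    have "card (A_words k) * card (A_words k) \<le> 4 ^ Suc k * 4 ^ Suc k"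
      using card_A_words by (intro mult_mono) auto
    also have "\<dots> = 16 ^ Suc k" by (simp flip: power_mult_distrib)
    finally show "real (card (A_words k) * card (A_words k)) \<le> 16 ^ Suc k"
      by (metis of_nat_le_iff of_nat_numeral of_nat_power)
  qed
  finally show ?thesis by (simp add: c_def)
qed

lemma coincidences_null:
  assumes "0 < \<delta>" "\<delta> \<le> r" "r < 1/16" "n \<ge> 1"
  shows "coincidences m n \<delta> r \<in> null_sets lebesgue"
proof -
  define N where "N = (\<Inter>k. coincidence_cover m n \<delta> r k)"
  define C where "C = 256 / \<delta> ^ (n - 1)"
  have "0 < C" using assms by (simp add: C_def)
  have N: "N \<in> sets borel"
    unfolding N_def by (rule sets.countable_INT) (use coincidence_cover_borel in auto)
  have bound: "emeasure lborel N \<le> ennreal (C * (16 * r) ^ k)" for k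
  proof -
    have "emeasure lborel N \<le> emeasure lborel (coincidence_cover m n \<delta> r k)"
      unfolding N_def by (intro emeasure_mono) (auto intro: coincidence_cover_borel)
    also have "\<dots> \<le> ennreal (16 ^ Suc k * (16 * r ^ k / \<delta> ^ (n - 1)))"
      using emeasure_coincidence_cover assms by simp
    also have "16 ^ Suc k * (16 * r ^ k / \<delta> ^ (n - 1)) = C * (16 * r) ^ k"
      by (simp add: C_def power_mult_distrib field_simps)
    finally show ?thesis .
  qed
  have small: "emeasure lborel N \<le> ennreal e" if "0 < e" for e
  proof -
    obtain k where "(16 * r) ^ k < e / C"
      using real_arch_pow_inv[of "e / C" "16 * r"] \<open>0 < e\<close> \<open>0 < C\<close> assms(3) by auto
    then have "C * (16 * r) ^ k \<le> e" using \<open>0 < C\<close> by (simp add: field_simps)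
    then show ?thesis using bound[of k] by (meson ennreal_leI order_trans)
  qed
  have "emeasure lborel N \<le> 0" by (rule ennreal_le_epsilon) (simp add: small)
  then have "N \<in> null_sets lborel" using N by (auto intro: null_setsI)
  moreover have "coincidences m n \<delta> r \<subseteq> N"
    unfolding N_def by (intro INT_greatest coincidences_subset_cover) (use assms in auto)
  ultimately show ?thesis by (blast intro: null_sets_completionI null_sets_completion_subset)
qed

lemma non_twofold_cantor_null:
  "{(p, q) \<in> {0<..<1/16} \<times> {0<..<1/16}. \<not> twofold_cantor p q} \<in> null_sets lebesgue"
proof -
  define \<delta> :: "nat \<Rightarrow> real" where "\<delta> j = 1 / (real j + 32)" for j
  define F where "F = (\<lambda>(m, n, j). coincidences (Suc m) (Suc n) (\<delta> j) (1/16 - \<delta> j))"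
  have "F t \<in> null_sets lebesgue" for t
    unfolding F_def \<delta>_def by (cases t) (auto intro!: coincidences_null simp: field_simps)
  then have "(\<Union>t. F t) \<in> null_sets lebesgue" by blast
  moreover have "{(p, q) \<in> {0<..<1/16} \<times> {0<..<1/16}. \<not> twofold_cantor p q} \<subseteq> (\<Union>t. F t)"
  proof clarify
    fix p q :: real assume pq: "p \<in> {0<..<1/16}" "q \<in> {0<..<1/16}" "\<not> twofold_cantor p q"
    then obtain m n a b where mn: "a \<in> Apq p q" "b \<in> Apq p q" "p ^ Suc m * a = q ^ Suc n * b"
      unfolding not_twofold_cantor_iff by (auto dest!: Suc_le_D)
    obtain j :: nat where "j > 0" "inverse (real j) < min (min p q) (min (1/16 - p) (1/16 - q))"
      using ex_inverse_of_nat_less[of "min (min p q) (min (1/16 - p) (1/16 - q))"] pq by auto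
    moreover have "\<delta> j \<le> inverse (real j)"
      using \<open>j > 0\<close> by (simp add: \<delta>_def field_simps)
    ultimately have "(p, q) \<in> F (m, n, j)"
      using mn unfolding F_def coincidences_def by auto
    then show "(p, q) \<in> (\<Union>t. F t)" by blast
  qed
  ultimately show ?thesis using null_sets_completion_subset by blast
qed

section \<open>The exceptional set is uncountable and dense\<close>

lemma uncountable_non_twofold_cantor:
  "uncountable {(p, q) \<in> {0<..<1/16} \<times> {0<..<1/16}. \<not> twofold_cantor p q}"
proof
  assume "countable {(p, q) \<in> {0<..<1/16} \<times> {0<..<1/16}. \<not> twofold_cantor p q}"
  moreover have "(\<lambda>t. (t, t)) ` {0<..<1/16} \<subseteq> {(p, q) \<in> {0<..<1/16} \<times> {0<..<1/16}. \<not> twofold_cantor p q}"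
    using not_twofold_cantor_if_powers_eq[of _ _ 1 1] by auto
  ultimately have "countable (fst ` (\<lambda>t. (t, t)) ` {0<..<1/16::real})"
    by (blast intro: countable_subset)
  then show False using uncountable_open_interval[of 0 "1/16::real"] by (simp add: image_image)
qed

text \<open>Take \<open>q' = p\<^bsup>r\<^esup>\<close> for a rational \<open>r = m/n\<close> close to \<open>log\<^sub>p q\<close>.\<close>
lemma exists_power_related_near:
  fixes p q e :: real
  assumes "0 < p" "p < 1" "0 < q" "q < 1" "0 < e"
  shows "\<exists>q' m n. m \<ge> 1 \<and> n \<ge> 1 \<and> \<bar>q' - q\<bar> < e \<and> p ^ m = q' ^ n"
proof -
  define t where "t = ln q / ln p"
  have "0 < t" using assms by (simp add: t_def divide_neg_neg)
  have "p powr t = q" using assms by (simp add: t_def powr_def)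
  have "isCont (\<lambda>s. p powr s) t" using assms by (auto intro!: continuous_intros)
  then obtain d where "0 < d" and d: "\<And>s. \<bar>s - t\<bar> < d \<Longrightarrow> \<bar>p powr s - q\<bar> < e"
    using \<open>p powr t = q\<close> assms(5) unfolding continuous_at_eps_delta dist_real_def by metis
  obtain r where r: "r \<in> \<rat>" "max (t - d) 0 < r" "r < t"
    using Rats_dense_in_real[of "max (t - d) 0" t] \<open>0 < t\<close> \<open>0 < d\<close> by auto
  obtain a b :: int where ab: "b > 0" "r = of_int a / of_int b"
    using Rats_cases'[OF r(1)] by metis
  then have "a > 0" using r(2) by (simp add: zero_less_divide_iff)
  have "(p powr r) ^ nat b = (p powr r) powr real (nat b)"
    using assms(1) by (simp add: powr_realpow)
  also have "\<dots> = p powr (r * real (nat b))" by (simp add: powr_powr)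
  also have "r * real (nat b) = real (nat a)" using ab \<open>a > 0\<close> by simp
  finally have "p ^ nat a = (p powr r) ^ nat b" using assms(1) by (simp add: powr_realpow)
  moreover have "\<bar>p powr r - q\<bar> < e" using d r by simp
  ultimately show ?thesis using ab(1) \<open>a > 0\<close>
    by (intro exI[of _ "p powr r"] exI[of _ "nat a"] exI[of _ "nat b"]) auto
qed

lemma dense_non_twofold_cantor:
  "{0<..<1/16} \<times> {0<..<1/16}
     \<subseteq> closure {(p, q) \<in> {0<..<1/16} \<times> {0<..<1/16}. \<not> twofold_cantor p q}"
proof clarify
  fix p q :: real assume pq: "p \<in> {0<..<1/16}" "q \<in> {0<..<1/16}"
  have "\<exists>z \<in> {(p, q) \<in> {0<..<1/16} \<times> {0<..<1/16}. \<not> twofold_cantor p q}. dist z (p, q) < e"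
    if "0 < e" for e
  proof -
    obtain q' m n where q': "m \<ge> 1" "n \<ge> 1" "\<bar>q' - q\<bar> < min e (min q (1/16 - q))" "p ^ m = q' ^ n"
      using exists_power_related_near[of p q "min e (min q (1/16 - q))"] pq \<open>0 < e\<close> by auto
    then have "\<not> twofold_cantor p q'"
      using pq by (intro not_twofold_cantor_if_powers_eq) auto
    then show ?thesis using pq q' by (intro bexI[of _ "(p, q')"]) (auto simp: dist_Pair_Pair dist_real_def)
  qed
  then show "(p, q) \<in> closure {(p, q) \<in> {0<..<1/16} \<times> {0<..<1/16}. \<not> twofold_cantor p q}"
    by (simp add: closure_approachable)
qed

theorem theorem19:
  fixes V KK :: "(real \<times> real) set"
  assumes "V = {0<..<1/16} \<times> {0<..<1/16}"
      and "KK = {(p, q) \<in> V. twofold_cantor p q}"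
  shows "V - KK \<in> null_sets lebesgue
         \<and> uncountable (V - KK)
         \<and> V \<subseteq> closure (V - KK)"
proof -
  have "V - KK = {(p, q) \<in> {0<..<1/16} \<times> {0<..<1/16}. \<not> twofold_cantor p q}"
    using assms by auto
  then show ?thesis
    using non_twofold_cantor_null uncountable_non_twofold_cantor dense_non_twofold_cantor assms(1)
    by simp
qed

end
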